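(* Let $A\in\mathbb{R}^{m\times n}$ be semi-monotone (i.e. $A^{\dagger}\geq 0$). Let $A=B-C$ be a proper weak regular splitting and $A=U-V$ a proper regular splitting of $A$. If $A\geq 0$ and $B^{\dagger}\geq U^{\dagger}$, then $$\rho(B^{\dagger}C)\leq \rho(U^{\dagger}V)<1.$$
   Context: All matrices are real. $X^{\dagger}$ denotes the Moore–Penrose inverse of $X$, and $\rho(\cdot)$ the spectral radius. For a matrix $X$, $X\geq 0$ means that all entries of $X$ are nonnegative and at least one entry is positive; $X\geq Y$ means $X-Y\geq 0$. $R(X)$ and $N(X)$ denote range and null space. A splitting $A=U-V$ is proper if $R(U)=R(A)$ and $N(U)=N(A)$. It is a proper regular splitting if it is proper, $U^{\dagger}\geq 0$ and $V\geq 0$; it is a proper weak regular splitting if it is proper, $U^{\dagger}\geq 0$ and $U^{\dagger}V\geq 0$. *)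

theory Defs
  imports "Jordan_Normal_Form.Spectral_Radius"
begin

definition mp_inverse :: "real mat \<Rightarrow> real mat" where
  "mp_inverse X = (THE Y. Y \<in> carrier_mat (dim_col X) (dim_row X) \<and>
      X * Y * X = X \<and> Y * X * Y = Y \<and>
      transpose_mat (X * Y) = X * Y \<and> transpose_mat (Y * X) = Y * X)"

(* X \<ge> 0 in the paper's sense: all entries nonnegative and at least one positive *)
definition mat_nonneg :: "real mat \<Rightarrow> bool" where
  "mat_nonneg X \<longleftrightarrow> (\<forall>i<dim_row X. \<forall>j<dim_col X. X $$ (i,j) \<ge> 0) \<and>
      (\<exists>i<dim_row X. \<exists>j<dim_col X. X $$ (i,j) > 0)"

definition mat_geq :: "real mat \<Rightarrow> real mat \<Rightarrow> bool" where
  "mat_geq X Y \<longleftrightarrow> mat_nonneg (X - Y)"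

definition range_mat :: "real mat \<Rightarrow> real vec set" where
  "range_mat X = {X *\<^sub>v x | x. x \<in> carrier_vec (dim_col X)}"

definition null_mat :: "real mat \<Rightarrow> real vec set" where
  "null_mat X = {x \<in> carrier_vec (dim_col X). X *\<^sub>v x = 0\<^sub>v (dim_row X)}"

definition proper_splitting :: "real mat \<Rightarrow> real mat \<Rightarrow> real mat \<Rightarrow> bool" where
  "proper_splitting A U V \<longleftrightarrow>
     U \<in> carrier_mat (dim_row A) (dim_col A) \<and> V \<in> carrier_mat (dim_row A) (dim_col A) \<and>
     A = U - V \<and> range_mat U = range_mat A \<and> null_mat U = null_mat A"

definition proper_regular_splitting :: "real mat \<Rightarrow> real mat \<Rightarrow> real mat \<Rightarrow> bool" where
  "proper_regular_splitting A U V \<longleftrightarrow>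
     proper_splitting A U V \<and> mat_nonneg (mp_inverse U) \<and> mat_nonneg V"

definition proper_weak_regular_splitting :: "real mat \<Rightarrow> real mat \<Rightarrow> real mat \<Rightarrow> bool" where
  "proper_weak_regular_splitting A U V \<longleftrightarrow>
     proper_splitting A U V \<and> mat_nonneg (mp_inverse U) \<and> mat_nonneg (mp_inverse U * V)"

definition rho :: "real mat \<Rightarrow> real" where
  "rho X = spectral_radius (map_mat complex_of_real X)"

end

theory Submission
  imports Defs "Jordan_Normal_Form.Matrix_Comparison"
begin

text \<open>Write \<open>Q = U\<^sup>\<dagger>\<close>. For a proper splitting, \<open>F = QU\<close> is the orthogonal projector
onto the orthogonal complement of \<open>N(A)\<close>; it splits as \<open>F = QA + QV\<close>, it fixes the range of
\<open>QV\<close>, and it depends only on \<open>N(A)\<close>, so \<open>F = B\<^sup>\<dagger>B\<close> as well.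
If \<open>QV v = \<lambda> v\<close> with \<open>\<lambda> \<noteq> 0\<close>, then \<open>v\<close> lies in the range of \<open>F\<close>, so \<open>QA v = (1 - \<lambda>) v\<close>. As \<open>QA\<close>
and \<open>QV\<close> are nonnegative, \<open>u = |v|\<close> satisfies \<open>|1 - \<lambda>| u \<le> QAu\<close> and \<open>|\<lambda>| u \<le> QVu\<close>, hence
\<open>u \<le> Fu\<close>; for an orthogonal projector this forces \<open>Fu = u\<close>, so \<open>u \<ge> (|1 - \<lambda>| + |\<lambda>|) u\<close>.
If \<open>|\<lambda>| \<ge> 1\<close> this gives \<open>\<lambda> = 1\<close> and \<open>QAu = 0\<close>, impossible since \<open>QA\<close> has the null space of \<open>A\<close>.
For the comparison, build \<open>u\<close> in the same way from an eigenvector of \<open>B\<^sup>\<dagger>C\<close> of maximal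
modulus; then \<open>QVu = u - QAu \<ge> u - B\<^sup>\<dagger>Au = B\<^sup>\<dagger>Cu \<ge> \<rho>(B\<^sup>\<dagger>C) u\<close>, and the Collatz\<endash>Wielandt bound
for the nonnegative matrix \<open>QV\<close> gives \<open>\<rho>(B\<^sup>\<dagger>C) \<le> \<rho>(QV)\<close>.\<close>

lemma mat_eq_mult_vecI:
  fixes A B :: "'a :: semiring_1 mat"
  assumes A: "A \<in> carrier_mat nr nc" and B: "B \<in> carrier_mat nr nc"
    and eq: "\<And>x. x \<in> carrier_vec nc \<Longrightarrow> A *\<^sub>v x = B *\<^sub>v x"
  shows "A = B"
proof (rule eq_matI)
  fix i j assume i: "i < dim_row B" and j: "j < dim_col B"
  have "A $$ (i,j) = (A *\<^sub>v unit_vec nc j) $ i" using A B i j by simp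
  also have "\<dots> = (B *\<^sub>v unit_vec nc j) $ i" by (simp add: eq)
  also have "\<dots> = B $$ (i,j)" using B i j by simp
  finally show "A $$ (i,j) = B $$ (i,j)" .
qed (use A B in auto)

lemma smult_mat_mult_vec:
  fixes A :: "'a :: comm_semiring_0 mat"
  assumes "A \<in> carrier_mat nr nc" and "v \<in> carrier_vec nc"
  shows "(k \<cdot>\<^sub>m A) *\<^sub>v v = k \<cdot>\<^sub>v (A *\<^sub>v v)"
  using assms by (intro eq_vecI) (auto simp: scalar_prod_def sum_distrib_left mult.assoc)

lemma smult_zero_vec[simp]: "k \<cdot>\<^sub>v 0\<^sub>v n = (0\<^sub>v n :: 'a :: mult_zero vec)"
  by (intro eq_vecI) auto

lemma zero_smult_vec[simp]: "(0 :: 'a :: mult_zero) \<cdot>\<^sub>v v = 0\<^sub>v (dim_vec v)"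
  by (intro eq_vecI) auto

lemma mult_mat_vec_zero[simp]: "A \<in> carrier_mat nr nc \<Longrightarrow> A *\<^sub>v 0\<^sub>v nc = (0\<^sub>v nr :: 'a :: semiring_0 vec)"
  by (intro eq_vecI) (auto simp: scalar_prod_def)

lemma vec_eq_of_minus_eq_zero:
  fixes u w :: "'a :: group_add vec"
  assumes "u \<in> carrier_vec n" "w \<in> carrier_vec n" "u - w = 0\<^sub>v n"
  shows "u = w"
proof (rule eq_vecI)
  fix i assume i: "i < dim_vec w"
  have "u $ i - w $ i = (u - w) $ i" using i by simp
  also have "\<dots> = 0" using assms(3) i assms(2) by simp
  finally show "u $ i = w $ i" by simp
qed (use assms in auto)

lemma mem_range_mat:
  "X \<in> carrier_mat m n \<Longrightarrow> v \<in> range_mat X \<longleftrightarrow> (\<exists>x \<in> carrier_vec n. v = X *\<^sub>v x)"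
  by (auto simp: range_mat_def)

lemma range_mat_closed:
  fixes X :: "real mat"
  assumes X: "X \<in> carrier_mat m n" and u: "u \<in> range_mat X" and w: "w \<in> range_mat X"
  shows "u + a \<cdot>\<^sub>v w \<in> range_mat X" and "u - w \<in> range_mat X"
proof -
  obtain x y where xy: "x \<in> carrier_vec n" "y \<in> carrier_vec n" "u = X *\<^sub>v x" "w = X *\<^sub>v y"
    using u w X by (auto simp: mem_range_mat)
  have "u + a \<cdot>\<^sub>v w = X *\<^sub>v (x + a \<cdot>\<^sub>v y)" and "u - w = X *\<^sub>v (x - y)"
    using X xy by (simp_all add: mult_add_distrib_mat_vec mult_minus_distrib_mat_vec mult_mat_vec)
  thus "u + a \<cdot>\<^sub>v w \<in> range_mat X" and "u - w \<in> range_mat X"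
    using X xy by (auto simp: mem_range_mat)
qed

lemma range_mat_subset_imp_factor:
  fixes M X :: "real mat"
  assumes M: "M \<in> carrier_mat m k" and X: "X \<in> carrier_mat m n"
    and sub: "range_mat M \<subseteq> range_mat X"
  shows "\<exists>Z \<in> carrier_mat n k. M = X * Z"
proof -
  have "\<exists>z \<in> carrier_vec n. col M j = X *\<^sub>v z" if "j < k" for j
  proof -
    have "col M j = M *\<^sub>v unit_vec k j" using M that by (intro eq_vecI) auto
    hence "col M j \<in> range_mat M" using M by (auto simp: mem_range_mat)
    thus ?thesis using sub X by (auto simp: mem_range_mat)
  qed
  then obtain z where z: "\<And>j. j < k \<Longrightarrow> z j \<in> carrier_vec n \<and> col M j = X *\<^sub>v z j"
    by metis
  define Z where "Z = mat n k (\<lambda>(i,j). z j $ i)"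
  have "M = X * Z"
  proof (rule mat_col_eqI)
    fix j assume "j < dim_col (X * Z)"
    hence j: "j < k" by (simp add: Z_def)
    have "col Z j = z j" using z[OF j] j by (auto simp: Z_def)
    moreover have "col (X * Z) j = X *\<^sub>v col Z j" using X j by (intro col_mult2) (auto simp: Z_def)
    ultimately show "col M j = col (X * Z) j" using z[OF j] by simp
  qed (use M X in \<open>auto simp: Z_def\<close>)
  thus ?thesis by (auto simp: Z_def)
qed

section \<open>Orthogonal projectors\<close>

definition orth_projector :: "nat \<Rightarrow> real mat \<Rightarrow> bool" where
  "orth_projector n E \<longleftrightarrow> E \<in> carrier_mat n n \<and> transpose_mat E = E \<and> E * E = E"

lemma orth_projector_idem_vec:
  assumes "orth_projector n E" "y \<in> carrier_vec n"
  shows "E *\<^sub>v (E *\<^sub>v y) = E *\<^sub>v y"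
  using assms assoc_mult_mat_vec[of E n n E n y] unfolding orth_projector_def by auto

lemma orth_projector_scalar_prod:
  assumes "orth_projector n E" "x \<in> carrier_vec n" "y \<in> carrier_vec n"
  shows "(E *\<^sub>v x) \<bullet> y = x \<bullet> (E *\<^sub>v y)"
  using transpose_vec_mult_scalar[of E n n y x] assms unfolding orth_projector_def by auto

definition outer_prod :: "real vec \<Rightarrow> real mat" where
  "outer_prod c = mat (dim_vec c) (dim_vec c) (\<lambda>(i,j). c $ i * c $ j)"

lemma outer_prod_carrier[simp]: "c \<in> carrier_vec n \<Longrightarrow> outer_prod c \<in> carrier_mat n n"
  by (auto simp: outer_prod_def)

lemma outer_prod_mult_vec:
  assumes "c \<in> carrier_vec n" "y \<in> carrier_vec n"
  shows "outer_prod c *\<^sub>v y = (c \<bullet> y) \<cdot>\<^sub>v c"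
  using assms by (intro eq_vecI)
    (auto simp: outer_prod_def scalar_prod_def sum_distrib_left sum_distrib_right ac_simps)

lemma orth_projector_add_outer_prod:
  fixes E :: "real mat" and c :: "real vec"
  assumes E: "orth_projector n E" and c: "c \<in> carrier_vec n" "c \<noteq> 0\<^sub>v n"
    and Ec: "E *\<^sub>v c = 0\<^sub>v n"
  defines "E' \<equiv> E + (1 / (c \<bullet> c)) \<cdot>\<^sub>m outer_prod c"
  shows "\<And>y. y \<in> carrier_vec n \<Longrightarrow> E' *\<^sub>v y = E *\<^sub>v y + ((c \<bullet> y) / (c \<bullet> c)) \<cdot>\<^sub>v c"
    and "orth_projector n E'"
proof -
  have E_carr: "E \<in> carrier_mat n n" and E_sym: "transpose_mat E = E"
    using E by (auto simp: orth_projector_def)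
  have E': "E' \<in> carrier_mat n n" using E_carr c by (simp add: E'_def)
  have cc: "c \<bullet> c > 0" using conjugate_square_greater_0_vec[of c n] c by simp
  show E'_vec: "E' *\<^sub>v y = E *\<^sub>v y + ((c \<bullet> y) / (c \<bullet> c)) \<cdot>\<^sub>v c" if y: "y \<in> carrier_vec n" for y
    using E_carr c y smult_mat_mult_vec[OF outer_prod_carrier[OF c(1)] y]
    by (simp add: E'_def add_mult_distrib_mat_vec outer_prod_mult_vec smult_smult_assoc)
  have c_E: "c \<bullet> (E *\<^sub>v y) = 0" if "y \<in> carrier_vec n" for y
    using orth_projector_scalar_prod[OF E c(1) that] Ec that by simp
  have "E' * E' = E'"
  proof (rule mat_eq_mult_vecI[of _ n n])
    fix y :: "real vec" assume y: "y \<in> carrier_vec n"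
    define b where "b = (c \<bullet> y) / (c \<bullet> c)"
    have E'y: "E' *\<^sub>v y = E *\<^sub>v y + b \<cdot>\<^sub>v c" using E'_vec[OF y] by (simp add: b_def)
    have "E *\<^sub>v (E' *\<^sub>v y) = E *\<^sub>v y"
      using E_carr c y Ec orth_projector_idem_vec[OF E y]
      by (simp add: E'y mult_add_distrib_mat_vec mult_mat_vec)
    moreover have "c \<bullet> (E' *\<^sub>v y) = b * (c \<bullet> c)"
      using E_carr c y c_E[OF y] by (simp add: E'y scalar_prod_add_distrib[of _ n])
    ultimately have "E' *\<^sub>v (E' *\<^sub>v y) = E' *\<^sub>v y"
      using E'_vec[of "E' *\<^sub>v y"] E' E_carr c y cc E'y by simp
    thus "(E' * E') *\<^sub>v y = E' *\<^sub>v y" using E' y by simp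
  qed (use E' in auto)
  moreover have "transpose_mat E' = E'"
  proof (rule eq_matI)
    fix i j assume "i < dim_row E'" "j < dim_col E'"
    hence ij: "i < n" "j < n" using E' by auto
    have "E $$ (j,i) = E $$ (i,j)" using E_sym ij E_carr by (metis carrier_matD index_transpose_mat(1))
    thus "transpose_mat E' $$ (i, j) = E' $$ (i, j)" using ij E_carr c
      by (simp add: E'_def outer_prod_def)
  qed (use E' in auto)
  ultimately show "orth_projector n E'" using E' by (simp add: orth_projector_def)
qed

text \<open>One Gram\<endash>Schmidt step: add to \<open>E\<close> the projector onto the line spanned by the
component of \<open>w\<close> orthogonal to the range of \<open>E\<close>.\<close>

lemma orth_projector_extend:
  fixes X E :: "real mat" and w :: "real vec"
  assumes X: "X \<in> carrier_mat m n" and E: "orth_projector m E"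
    and E_range: "range_mat E \<subseteq> range_mat X" and w: "w \<in> range_mat X"
  shows "\<exists>E'. orth_projector m E' \<and> range_mat E' \<subseteq> range_mat X \<and> E' *\<^sub>v w = w \<and>
    (\<forall>x \<in> carrier_vec m. E *\<^sub>v x = x \<longrightarrow> E' *\<^sub>v x = x)"
proof -
  have E_carr: "E \<in> carrier_mat m m" using E by (simp add: orth_projector_def)
  have w_carr: "w \<in> carrier_vec m" using w X by (auto simp: mem_range_mat)
  have E_in_X: "E *\<^sub>v y \<in> range_mat X" if "y \<in> carrier_vec m" for y
    using E_range E_carr that by (auto simp: range_mat_def)
  define c where "c = w - E *\<^sub>v w"
  have c: "c \<in> carrier_vec m" "c \<in> range_mat X"
    using w_carr E_carr range_mat_closed(2)[OF X w E_in_X[OF w_carr]] by (simp_all add: c_def)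
  have w_split: "w = E *\<^sub>v w + c" using w_carr E_carr by (auto simp: c_def)
  show ?thesis
  proof (cases "c = 0\<^sub>v m")
    case True
    thus ?thesis using E E_range w_split E_carr w_carr by (intro exI[of _ E]) auto
  next
    case False
    have Ec: "E *\<^sub>v c = 0\<^sub>v m"
      using orth_projector_idem_vec[OF E w_carr] E_carr w_carr
      by (simp add: c_def mult_minus_distrib_mat_vec)
    define E' where "E' = E + (1 / (c \<bullet> c)) \<cdot>\<^sub>m outer_prod c"
    note E'_vec = orth_projector_add_outer_prod(1)[OF E c(1) False Ec, folded E'_def]
    have c_E: "c \<bullet> (E *\<^sub>v y) = 0" if "y \<in> carrier_vec m" for y
      using orth_projector_scalar_prod[OF E c(1) that] Ec that by simp
    have "c \<bullet> w = c \<bullet> c"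
      using c_E[OF w_carr] c E_carr w_carr
      by (subst (1) w_split) (simp add: scalar_prod_add_distrib[of _ m])
    hence "E' *\<^sub>v w = w"
      using E'_vec[OF w_carr] False conjugate_square_greater_0_vec[of c m] c w_split by simp
    moreover have "E' *\<^sub>v x = x" if "x \<in> carrier_vec m" "E *\<^sub>v x = x" for x
      using E'_vec[OF that(1)] c_E[OF that(1)] that c by simp
    moreover have "range_mat E' \<subseteq> range_mat X"
    proof
      fix v assume "v \<in> range_mat E'"
      then obtain y where y: "y \<in> carrier_vec m" and "v = E' *\<^sub>v y"
        using E_carr c mem_range_mat[of E' m m v] by (auto simp: E'_def)
      hence "v = E *\<^sub>v y + ((c \<bullet> y) / (c \<bullet> c)) \<cdot>\<^sub>v c" using E'_vec by simp
      thus "v \<in> range_mat X" using range_mat_closed(1)[OF X E_in_X[OF y] c(2)] by simp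
    qed
    ultimately show ?thesis
      using orth_projector_add_outer_prod(2)[OF E c(1) False Ec, folded E'_def] by blast
  qed
qed

lemma orth_projector_onto_range_exists:
  fixes X :: "real mat"
  assumes X: "X \<in> carrier_mat m n"
  shows "\<exists>E. orth_projector m E \<and> range_mat E \<subseteq> range_mat X \<and> E * X = X"
proof -
  have "\<exists>E. orth_projector m E \<and> range_mat E \<subseteq> range_mat X \<and> (\<forall>j<k. E *\<^sub>v col X j = col X j)"
    if "k \<le> n" for k
    using that
  proof (induction k)
    case 0
    have "range_mat (0\<^sub>m m m) = {0\<^sub>v m}"
      by (auto simp: range_mat_def intro!: eq_vecI exI[of _ "0\<^sub>v m"])
    moreover have "0\<^sub>v m \<in> range_mat X"
      using X by (auto simp: mem_range_mat intro!: bexI[of _ "0\<^sub>v n"] eq_vecI)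
    ultimately have "range_mat (0\<^sub>m m m) \<subseteq> range_mat X" by simp
    thus ?case by (intro exI[of _ "0\<^sub>m m m"]) (simp add: orth_projector_def)
  next
    case (Suc k)
    then obtain E where E: "orth_projector m E" "range_mat E \<subseteq> range_mat X"
      and fix_cols: "\<forall>j<k. E *\<^sub>v col X j = col X j" by auto
    have "col X k = X *\<^sub>v unit_vec n k" using X Suc.prems by (intro eq_vecI) auto
    hence "col X k \<in> range_mat X" using X by (auto simp: mem_range_mat)
    from orth_projector_extend[OF X E this] obtain E' where
      "orth_projector m E'" "range_mat E' \<subseteq> range_mat X" "E' *\<^sub>v col X k = col X k"
      "\<forall>x \<in> carrier_vec m. E *\<^sub>v x = x \<longrightarrow> E' *\<^sub>v x = x" by blast
    thus ?case using fix_cols X by (intro exI[of _ E']) (auto simp: less_Suc_eq)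
  qed
  then obtain E where E: "orth_projector m E" "range_mat E \<subseteq> range_mat X"
    and fix_cols: "\<forall>j<n. E *\<^sub>v col X j = col X j" by blast
  have "E * X = X"
  proof (rule mat_col_eqI)
    fix j assume "j < dim_col X"
    thus "col (E * X) j = col X j"
      using E(1) X fix_cols col_mult2[of E m m X n j] by (simp add: orth_projector_def)
  qed (use E(1) X in \<open>auto simp: orth_projector_def\<close>)
  thus ?thesis using E by blast
qed

lemma mult_idem_eq_of_null_subset:
  fixes A B :: "real mat"
  assumes A: "A \<in> carrier_mat k n" and B: "B \<in> carrier_mat n n" and B_idem: "B * B = B"
    and null: "null_mat B \<subseteq> null_mat A"
  shows "A * B = A"
proof (rule mat_eq_mult_vecI[of _ k n])
  fix x :: "real vec" assume x: "x \<in> carrier_vec n"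
  have "B *\<^sub>v (x - B *\<^sub>v x) = 0\<^sub>v n"
    using B x B_idem assoc_mult_mat_vec[OF B B x] by (simp add: mult_minus_distrib_mat_vec)
  hence "x - B *\<^sub>v x \<in> null_mat B" using x B by (simp add: null_mat_def)
  hence "x - B *\<^sub>v x \<in> null_mat A" using null by blast
  hence "A *\<^sub>v (x - B *\<^sub>v x) = 0\<^sub>v k" using A by (simp add: null_mat_def)
  hence "A *\<^sub>v x - A *\<^sub>v (B *\<^sub>v x) = 0\<^sub>v k" using A B x by (simp add: mult_minus_distrib_mat_vec)
  hence "A *\<^sub>v x = A *\<^sub>v (B *\<^sub>v x)"
    by (rule vec_eq_of_minus_eq_zero[rotated 2]) (use A B x in simp_all)
  thus "(A * B) *\<^sub>v x = A *\<^sub>v x" using A B x by simp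
qed (use A B in auto)

lemma orth_projector_eq_of_null_eq:
  assumes E1: "orth_projector n E1" and E2: "orth_projector n E2"
    and null: "null_mat E1 = null_mat E2"
  shows "E1 = E2"
proof -
  have carr: "E1 \<in> carrier_mat n n" "E2 \<in> carrier_mat n n" and sym: "transpose_mat E1 = E1" "transpose_mat E2 = E2"
    using E1 E2 by (auto simp: orth_projector_def)
  have idem: "E1 * E1 = E1" "E2 * E2 = E2" using E1 E2 by (auto simp: orth_projector_def)
  have "E1 * E2 = E1" using mult_idem_eq_of_null_subset[OF carr idem(2)] null by simp
  have "E2 * E1 = E2" using mult_idem_eq_of_null_subset[OF carr(2,1) idem(1)] null by simp
  have "E1 = transpose_mat (E1 * E2)" using \<open>E1 * E2 = E1\<close> sym by simp
  also have "\<dots> = E2 * E1" using transpose_mult[OF carr] sym by simp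
  finally show ?thesis using \<open>E2 * E1 = E2\<close> by simp
qed

lemma orth_projector_fixes_of_le:
  fixes F :: "real mat"
  assumes F: "orth_projector n F" and u: "u \<in> carrier_vec n" "0\<^sub>v n \<le> u"
    and le: "u \<le> F *\<^sub>v u"
  shows "F *\<^sub>v u = u"
proof -
  have F_carr: "F \<in> carrier_mat n n" using F by (simp add: orth_projector_def)
  define w where "w = F *\<^sub>v u"
  have w: "w \<in> carrier_vec n" using F_carr u by (simp add: w_def)
  have ww: "w \<bullet> w = u \<bullet> w"
    using orth_projector_scalar_prod[OF F u(1) w] orth_projector_idem_vec[OF F u(1)] by (simp add: w_def)
  have "(w - u) \<bullet> u \<ge> 0"
    using u le w unfolding w_def[symmetric] less_eq_vec_def
    by (auto simp: scalar_prod_def intro!: sum_nonneg)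
  moreover have "(w - u) \<bullet> (w - u) = (w \<bullet> w - u \<bullet> w) - (w - u) \<bullet> u"
    using u w by (simp add: scalar_prod_minus_distrib[of _ n] minus_scalar_prod_distrib[of _ n])
  ultimately have "(w - u) \<bullet> (w - u) \<le> 0" using ww by simp
  hence "w - u = 0\<^sub>v n" using conjugate_square_greater_0_vec[of "w - u" n] u w by force
  thus ?thesis using vec_eq_of_minus_eq_zero[OF w u(1)] by (simp add: w_def)
qed

section \<open>The Moore--Penrose inverse and proper splittings\<close>

definition is_mp_inverse :: "real mat \<Rightarrow> real mat \<Rightarrow> bool" where
  "is_mp_inverse X Y \<longleftrightarrow> Y \<in> carrier_mat (dim_col X) (dim_row X) \<and>
      X * Y * X = X \<and> Y * X * Y = Y \<and>
      transpose_mat (X * Y) = X * Y \<and> transpose_mat (Y * X) = Y * X"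

lemma is_mp_inverse_transpose:
  assumes X: "X \<in> carrier_mat m n" and XY: "is_mp_inverse X Y"
  shows "is_mp_inverse (transpose_mat X) (transpose_mat Y)"
proof -
  have Y: "Y \<in> carrier_mat n m" and eqs: "X * Y * X = X" "Y * X * Y = Y"
    "transpose_mat (X * Y) = X * Y" "transpose_mat (Y * X) = Y * X"
    using X XY by (auto simp: is_mp_inverse_def)
  have XY_T: "transpose_mat X * transpose_mat Y = Y * X" and YX_T: "transpose_mat Y * transpose_mat X = X * Y"
    using transpose_mult[OF Y X] transpose_mult[OF X Y] eqs(3,4) by simp_all
  have XT: "transpose_mat X \<in> carrier_mat n m" and YT: "transpose_mat Y \<in> carrier_mat m n"
    using X Y by auto
  have "transpose_mat X * transpose_mat Y * transpose_mat X = transpose_mat (X * Y * X)"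
    using transpose_mult[OF mult_carrier_mat[OF X Y] X] transpose_mult[OF X Y]
      assoc_mult_mat[OF XT YT XT] by simp
  moreover have "transpose_mat Y * transpose_mat X * transpose_mat Y = transpose_mat (Y * X * Y)"
    using transpose_mult[OF mult_carrier_mat[OF Y X] Y] transpose_mult[OF Y X]
      assoc_mult_mat[OF YT XT YT] by simp
  ultimately show ?thesis
    using X Y eqs by (simp add: is_mp_inverse_def XY_T YX_T)
qed

lemma is_mp_inverse_mult_eq:
  assumes X: "X \<in> carrier_mat m n" and Y1: "is_mp_inverse X Y1" and Y2: "is_mp_inverse X Y2"
  shows "X * Y1 = X * Y2"
proof -
  have carr: "Y1 \<in> carrier_mat n m" "Y2 \<in> carrier_mat n m"
    and eqs: "X * Y1 * X = X" "X * Y2 * X = X"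
    "transpose_mat (X * Y1) = X * Y1" "transpose_mat (X * Y2) = X * Y2"
    using X Y1 Y2 by (auto simp: is_mp_inverse_def)
  have XY1: "X * Y1 \<in> carrier_mat m m" and XY2: "X * Y2 \<in> carrier_mat m m" using X carr by auto
  have "X * Y1 = transpose_mat (X * Y2 * X * Y1)" using eqs(2,3) by simp
  also have "\<dots> = transpose_mat ((X * Y2) * (X * Y1))" using assoc_mult_mat[OF XY2 X carr(1)] by simp
  also have "\<dots> = (X * Y1) * (X * Y2)" using transpose_mult[OF XY2 XY1] eqs(3,4) by simp
  also have "\<dots> = X * Y1 * X * Y2" using assoc_mult_mat[OF XY1 X carr(2)] by simp
  finally show ?thesis using eqs(1) by simp
qed

lemma is_mp_inverse_unique:
  assumes X: "X \<in> carrier_mat m n" and Y1: "is_mp_inverse X Y1" and Y2: "is_mp_inverse X Y2"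
  shows "Y1 = Y2"
proof -
  have carr: "Y1 \<in> carrier_mat n m" "Y2 \<in> carrier_mat n m"
    and eqs: "Y1 * X * Y1 = Y1" "Y2 * X * Y2 = Y2"
    using X Y1 Y2 by (auto simp: is_mp_inverse_def)
  have XY: "X * Y1 = X * Y2" by (rule is_mp_inverse_mult_eq[OF X Y1 Y2])
  have "transpose_mat X * transpose_mat Y1 = transpose_mat X * transpose_mat Y2"
    using X by (intro is_mp_inverse_mult_eq[of _ n m] is_mp_inverse_transpose Y1 Y2) auto
  hence YX: "Y1 * X = Y2 * X"
    using transpose_mult[of "transpose_mat X" n m "transpose_mat Y1" n]
      transpose_mult[of "transpose_mat X" n m "transpose_mat Y2" n] X carr by simp
  have "Y1 = Y1 * (X * Y1)" using eqs(1) assoc_mult_mat[OF carr(1) X carr(1)] by simp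
  also have "\<dots> = (Y2 * X) * Y2" using XY YX assoc_mult_mat[OF carr(1) X carr(2)] by simp
  finally show ?thesis using eqs(2) by simp
qed

lemma is_mp_inverse_exists:
  fixes X :: "real mat"
  assumes X: "X \<in> carrier_mat m n"
  shows "\<exists>Y. is_mp_inverse X Y"
proof -
  have XT: "transpose_mat X \<in> carrier_mat n m" using X by simp
  obtain Ec where Ec: "orth_projector m Ec" "range_mat Ec \<subseteq> range_mat X" "Ec * X = X"
    using orth_projector_onto_range_exists[OF X] by blast
  obtain Er where Er: "orth_projector n Er" "range_mat Er \<subseteq> range_mat (transpose_mat X)"
    "Er * transpose_mat X = transpose_mat X"
    using orth_projector_onto_range_exists[OF XT] by blast
  have Ec_carr: "Ec \<in> carrier_mat m m" and Er_carr: "Er \<in> carrier_mat n n"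
    and Ec_sym: "transpose_mat Ec = Ec" and Er_sym: "transpose_mat Er = Er"
    using Ec(1) Er(1) by (auto simp: orth_projector_def)
  obtain Z where Z: "Z \<in> carrier_mat n m" "Ec = X * Z"
    using range_mat_subset_imp_factor[OF Ec_carr X Ec(2)] by blast
  obtain W where W: "W \<in> carrier_mat m n" "Er = transpose_mat X * W"
    using range_mat_subset_imp_factor[OF Er_carr XT Er(2)] by blast
  have X_Er: "X * Er = X"
    using arg_cong[OF Er(3), of transpose_mat] transpose_mult[OF Er_carr XT] Er_sym by simp
  have Er_eq: "Er = transpose_mat W * X"
    using arg_cong[OF W(2), of transpose_mat] transpose_mult[OF XT W(1)] Er_sym by simp
  define Y where "Y = Er * Z"
  have Y: "Y \<in> carrier_mat n m" using Er_carr Z by (simp add: Y_def)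
  have XY: "X * Y = Ec" using assoc_mult_mat[OF X Er_carr Z(1)] X_Er Z(2) by (simp add: Y_def)
  have WT: "transpose_mat W \<in> carrier_mat n m" using W(1) by simp
  have "Y * X = Er * (Z * X)" using assoc_mult_mat[OF Er_carr Z(1) X] by (simp add: Y_def)
  also have "\<dots> = transpose_mat W * (X * Z * X)"
    using assoc_mult_mat[OF WT X mult_carrier_mat[OF Z(1) X]] assoc_mult_mat[OF X Z(1) X]
    by (simp add: Er_eq)
  finally have YX: "Y * X = Er" using Ec(3) Z(2) Er_eq by simp
  have "Y * X * Y = Er * Er * Z" using YX assoc_mult_mat[OF Er_carr Er_carr Z(1)] by (simp add: Y_def)
  hence "Y * X * Y = Y" using Er(1) by (simp add: orth_projector_def Y_def)
  thus ?thesis using Y X XY YX Ec(3) Ec_sym Er_sym by (auto simp: is_mp_inverse_def)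
qed

lemma is_mp_inverse_mp_inverse:
  assumes X: "X \<in> carrier_mat m n"
  shows "is_mp_inverse X (mp_inverse X)"
proof -
  have "\<exists>!Y. is_mp_inverse X Y" using is_mp_inverse_exists[OF X] is_mp_inverse_unique[OF X] by blast
  thus ?thesis unfolding mp_inverse_def is_mp_inverse_def[symmetric] by (rule theI')
qed

lemma mp_inverse_carrier: "X \<in> carrier_mat m n \<Longrightarrow> mp_inverse X \<in> carrier_mat n m"
  using is_mp_inverse_mp_inverse by (auto simp: is_mp_inverse_def)

lemma orth_projector_mp_inverse_mult:
  assumes X: "X \<in> carrier_mat m n"
  shows "orth_projector n (mp_inverse X * X)"
proof -
  let ?Y = "mp_inverse X"
  have Y: "?Y \<in> carrier_mat n m" and YXY: "?Y * X * ?Y = ?Y"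
    and sym: "transpose_mat (?Y * X) = ?Y * X"
    using is_mp_inverse_mp_inverse[OF X] X by (auto simp: is_mp_inverse_def)
  have "(?Y * X) * (?Y * X) = ?Y * X"
    using assoc_mult_mat[OF mult_carrier_mat[OF Y X] Y X] YXY by simp
  thus ?thesis using Y X sym by (simp add: orth_projector_def)
qed

lemma mult_mp_inverse_mult_of_range_subset:
  fixes X A :: "real mat"
  assumes X: "X \<in> carrier_mat m n" and A: "A \<in> carrier_mat m k"
    and sub: "range_mat A \<subseteq> range_mat X"
  shows "X * (mp_inverse X * A) = A"
proof -
  obtain W where W: "W \<in> carrier_mat n k" "A = X * W"
    using range_mat_subset_imp_factor[OF A X sub] by blast
  have Y: "mp_inverse X \<in> carrier_mat n m" by (rule mp_inverse_carrier[OF X])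
  have "X * (mp_inverse X * (X * W)) = (X * mp_inverse X * X) * W"
    using assoc_mult_mat[OF X Y mult_carrier_mat[OF X W(1)]]
      assoc_mult_mat[OF mult_carrier_mat[OF X Y] X W(1)] by simp
  thus ?thesis using is_mp_inverse_mp_inverse[OF X] W(2) by (simp add: is_mp_inverse_def)
qed

lemma null_mat_mult_of_cancel:
  assumes X: "X \<in> carrier_mat m n" and Q: "Q \<in> carrier_mat k m" and P: "P \<in> carrier_mat m k"
    and cancel: "P * (Q * X) = X"
  shows "null_mat (Q * X) = null_mat X"
proof -
  have "X *\<^sub>v x = 0\<^sub>v m \<longleftrightarrow> (Q * X) *\<^sub>v x = 0\<^sub>v k" if x: "x \<in> carrier_vec n" for x
  proof
    assume "(Q * X) *\<^sub>v x = 0\<^sub>v k"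
    hence "(P * (Q * X)) *\<^sub>v x = 0\<^sub>v m"
      using assoc_mult_mat_vec[OF P mult_carrier_mat[OF Q X] x] P by simp
    thus "X *\<^sub>v x = 0\<^sub>v m" using cancel by simp
  qed (use Q X x in simp)
  thus ?thesis using X Q by (auto simp: null_mat_def)
qed

lemma proper_splitting_carrier:
  "proper_splitting A U V \<Longrightarrow> A \<in> carrier_mat m n \<Longrightarrow> U \<in> carrier_mat m n \<and> V \<in> carrier_mat m n"
  by (simp add: proper_splitting_def)

lemma proper_splitting_projector:
  fixes A U V :: "real mat"
  assumes A: "A \<in> carrier_mat m n" and split: "proper_splitting A U V"
  defines "Q \<equiv> mp_inverse U"
  shows "orth_projector n (Q * U)" and "Q * U = Q * A + Q * V" and "(Q * U) * (Q * V) = Q * V"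
    and "null_mat (Q * U) = null_mat A" and "null_mat (Q * A) = null_mat A"
proof -
  have U: "U \<in> carrier_mat m n" and V: "V \<in> carrier_mat m n" and AUV: "A = U - V"
    and range: "range_mat U = range_mat A" and null: "null_mat U = null_mat A"
    using split A by (auto simp: proper_splitting_def)
  have Q: "Q \<in> carrier_mat n m" using mp_inverse_carrier[OF U] by (simp add: Q_def)
  show "orth_projector n (Q * U)" using orth_projector_mp_inverse_mult[OF U] by (simp add: Q_def)
  have "U = A + V" using AUV U V by (intro eq_matI) auto
  thus "Q * U = Q * A + Q * V" using Q A V by (simp add: mult_add_distrib_mat)
  have "Q * U * Q = Q" using is_mp_inverse_mp_inverse[OF U] by (simp add: is_mp_inverse_def Q_def)
  thus "(Q * U) * (Q * V) = Q * V" using assoc_mult_mat[OF mult_carrier_mat[OF Q U] Q V] by simp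
  have "U * (Q * U) = U" using is_mp_inverse_mp_inverse[OF U] assoc_mult_mat[OF U Q U]
    by (simp add: is_mp_inverse_def Q_def)
  thus "null_mat (Q * U) = null_mat A" using null_mat_mult_of_cancel[OF U Q U] null by simp
  have "U * (Q * A) = A" using mult_mp_inverse_mult_of_range_subset[OF U A] range by (simp add: Q_def)
  thus "null_mat (Q * A) = null_mat A" by (rule null_mat_mult_of_cancel[OF A Q U])
qed

section \<open>Nonnegative matrices and the spectral radius\<close>

lemma mat_nonneg_imp_ge_0: "mat_nonneg X \<Longrightarrow> X \<ge>\<^sub>m 0\<^sub>m (dim_row X) (dim_col X)"
  by (auto simp: mat_nonneg_def mat_ge_def)

lemma mat_geq_imp_mat_ge:
  "P \<in> carrier_mat nr nc \<Longrightarrow> Q \<in> carrier_mat nr nc \<Longrightarrow> mat_geq P Q \<Longrightarrow> P \<ge>\<^sub>m Q"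
  by (auto simp: mat_geq_def mat_nonneg_def mat_ge_def)

lemma mult_mat_vec_mono:
  fixes M :: "real mat"
  assumes "M \<in> carrier_mat nr nc" "M \<ge>\<^sub>m 0\<^sub>m nr nc" "u \<le> w" "w \<in> carrier_vec nc"
  shows "M *\<^sub>v u \<le> M *\<^sub>v w"
  using assms unfolding less_eq_vec_def
  by (auto intro!: sum_mono mult_left_mono simp: mat_ge_def scalar_prod_def)

lemma mult_mat_vec_mono_mat:
  fixes M M' :: "real mat"
  assumes "M \<in> carrier_mat nr nc" "M' \<in> carrier_mat nr nc" "M \<ge>\<^sub>m M'"
    "u \<ge> 0\<^sub>v nc"
  shows "M' *\<^sub>v u \<le> M *\<^sub>v u"
  using assms unfolding less_eq_vec_def
  by (auto intro!: sum_mono mult_right_mono simp: mat_ge_def scalar_prod_def)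

lemma mult_mat_ge_zero:
  fixes X Y :: "real mat"
  assumes "X \<in> carrier_mat nr n" "Y \<in> carrier_mat n nc"
    "X \<ge>\<^sub>m 0\<^sub>m nr n" "Y \<ge>\<^sub>m 0\<^sub>m n nc"
  shows "X * Y \<ge>\<^sub>m 0\<^sub>m nr nc"
  using assms by (intro mat_geI[of _ nr nc]) (auto intro!: sum_nonneg simp: mat_ge_def scalar_prod_def)

lemma mult_mat_mono_left:
  fixes P Q A :: "real mat"
  assumes "P \<in> carrier_mat nr n" "Q \<in> carrier_mat nr n" "A \<in> carrier_mat n nc"
    "P \<ge>\<^sub>m Q" "A \<ge>\<^sub>m 0\<^sub>m n nc"
  shows "P * A \<ge>\<^sub>m Q * A"
  using assms by (intro mat_geI[of _ nr nc]) (auto intro!: sum_mono mult_right_mono simp: mat_ge_def scalar_prod_def)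

lemma smult_vec_mono:
  fixes u w :: "real vec"
  shows "0 \<le> a \<Longrightarrow> u \<le> w \<Longrightarrow> a \<cdot>\<^sub>v u \<le> a \<cdot>\<^sub>v w"
  by (auto simp: less_eq_vec_def intro: mult_left_mono)

lemma rho_attained:
  assumes "T \<in> carrier_mat n n" "n > 0"
  obtains v l where "eigenvector (map_mat complex_of_real T) v l" "rho T = cmod l"
  using spectral_radius_mem_max(1)[of "map_mat complex_of_real T" n] assms
  by (auto simp: rho_def spectrum_def eigenvalue_def)

lemma eigenvalue_norm_le_rho:
  assumes "T \<in> carrier_mat n n" "n > 0" "eigenvector (map_mat complex_of_real T) v l"
  shows "cmod l \<le> rho T"
proof -
  have "cmod l \<in> cmod ` spectrum (map_mat complex_of_real T)"
    using assms(3) unfolding spectrum_def eigenvalue_def by blast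
  thus ?thesis using spectral_radius_mem_max(2)[of "map_mat complex_of_real T" n] assms(1,2)
    by (simp add: rho_def)
qed

lemma rho_nonneg: "T \<in> carrier_mat n n \<Longrightarrow> n > 0 \<Longrightarrow> 0 \<le> rho T"
  by (metis norm_ge_zero rho_attained)

lemma eigenvector_smult:
  fixes A :: "'a :: comm_ring_1 mat"
  assumes A: "A \<in> carrier_mat n n" and ev: "eigenvector A v l"
  shows "eigenvector (k \<cdot>\<^sub>m A) v (k * l)"
  using ev A smult_mat_mult_vec[OF A, of v k] by (auto simp: eigenvector_def smult_smult_assoc)

lemma rho_smult_le:
  fixes T :: "real mat"
  assumes T: "T \<in> carrier_mat n n" and n: "n > 0" and c: "c > 0"
  shows "rho (c \<cdot>\<^sub>m T) \<le> c * rho T"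
proof -
  let ?c = "map_mat complex_of_real"
  obtain v l where ev: "eigenvector (?c (c \<cdot>\<^sub>m T)) v l" and rho: "rho (c \<cdot>\<^sub>m T) = cmod l"
    using rho_attained[of "c \<cdot>\<^sub>m T" n] T n by auto
  have "(1 / complex_of_real c) \<cdot>\<^sub>m ?c (c \<cdot>\<^sub>m T) = ?c T" using T c by (intro eq_matI) auto
  hence "eigenvector (?c T) v (l / complex_of_real c)"
    using eigenvector_smult[OF _ ev, of n "1 / complex_of_real c"] T by simp
  hence "cmod (l / complex_of_real c) \<le> rho T" by (rule eigenvalue_norm_le_rho[OF T n])
  hence "cmod l / c \<le> rho T" using c by (simp add: norm_divide)
  thus ?thesis using rho c by (simp add: field_simps)
qed

lemma rho_lt_1_imp_pow_bounded:
  fixes M :: "real mat"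
  assumes M: "M \<in> carrier_mat n n" and rho: "rho M < 1"
  obtains c where "\<And>k i j. i < n \<Longrightarrow> j < n \<Longrightarrow> \<bar>(M ^\<^sub>m k) $$ (i,j)\<bar> \<le> c"
proof -
  let ?c = "map_mat complex_of_real"
  obtain c where c: "\<And>k. norm_bound (?c M ^\<^sub>m k) c"
    using spectral_radius_jnf_norm_bound_less_1_upper_triangular[of "?c M" n] M rho
    by (auto simp: rho_def)
  have "\<bar>(M ^\<^sub>m k) $$ (i,j)\<bar> \<le> c" if "i < n" "j < n" for k i j
  proof -
    have "cmod ((?c M ^\<^sub>m k) $$ (i,j)) \<le> c" using c[of k] M that by (simp add: norm_bound_def)
    moreover have "(?c M ^\<^sub>m k) $$ (i,j) = complex_of_real ((M ^\<^sub>m k) $$ (i,j))"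
      using of_real_hom.mat_hom_pow[OF M, of k] M that by (metis index_map_mat(1) pow_mat_dim_square(1,2))
    ultimately show ?thesis by simp
  qed
  thus ?thesis using that by blast
qed

lemma nonneg_pow_mult_vec_ge:
  fixes M :: "real mat"
  assumes M: "M \<in> carrier_mat n n" "M \<ge>\<^sub>m 0\<^sub>m n n" and q: "q \<ge> 0"
  shows "u \<in> carrier_vec n \<Longrightarrow> 0\<^sub>v n \<le> u \<Longrightarrow> q \<cdot>\<^sub>v u \<le> M *\<^sub>v u \<Longrightarrow> q ^ k \<cdot>\<^sub>v u \<le> M ^\<^sub>m k *\<^sub>v u"
proof (induction k arbitrary: u)
  case 0
  thus ?case using M by simp
next
  case (Suc k)
  have Mu: "M *\<^sub>v u \<in> carrier_vec n" "0\<^sub>v n \<le> M *\<^sub>v u"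
    using mult_mat_vec_mono[OF M Suc.prems(2)] M Suc.prems(1) by auto
  have "q \<cdot>\<^sub>v (M *\<^sub>v u) \<le> M *\<^sub>v (M *\<^sub>v u)"
    using mult_mat_vec_mono[OF M Suc.prems(3)] M Suc.prems(1) by (simp add: mult_mat_vec)
  hence "q ^ k \<cdot>\<^sub>v (M *\<^sub>v u) \<le> M ^\<^sub>m k *\<^sub>v (M *\<^sub>v u)" using Suc.IH[OF Mu] by simp
  moreover have "q ^ Suc k \<cdot>\<^sub>v u \<le> q ^ k \<cdot>\<^sub>v (M *\<^sub>v u)"
    using smult_vec_mono[OF _ Suc.prems(3), of "q ^ k"] q by (simp add: smult_smult_assoc mult.commute)
  ultimately show ?case
    using assoc_mult_mat_vec[of "M ^\<^sub>m k" n n M n u] M Suc.prems(1) by (simp add: order.trans)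
qed

lemma nonneg_expanding_imp_rho_ge_1:
  fixes M :: "real mat"
  assumes M: "M \<in> carrier_mat n n" "M \<ge>\<^sub>m 0\<^sub>m n n"
    and u: "u \<in> carrier_vec n" "0\<^sub>v n \<le> u" "u \<noteq> 0\<^sub>v n"
    and q: "q > 1" and Mu: "q \<cdot>\<^sub>v u \<le> M *\<^sub>v u"
  shows "1 \<le> rho M"
proof (rule ccontr)
  assume "\<not> 1 \<le> rho M"
  then obtain c where c: "\<And>k i j. i < n \<Longrightarrow> j < n \<Longrightarrow> \<bar>(M ^\<^sub>m k) $$ (i,j)\<bar> \<le> c"
    using rho_lt_1_imp_pow_bounded[OF M(1)] by force
  obtain i where i: "i < n" and ui: "u $ i > 0"
    using u by (metis eq_vecI index_zero_vec less_eq_vec_def carrier_vecD order_le_less)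
  define S where "S = (\<Sum>j\<in>{0..<n}. u $ j)"
  have "q ^ k * u $ i \<le> c * S" for k
  proof -
    have "q ^ k * u $ i \<le> (M ^\<^sub>m k *\<^sub>v u) $ i"
      using nonneg_pow_mult_vec_ge[OF M, of q u k] q u Mu i by (auto simp: less_eq_vec_def)
    also have "\<dots> = (\<Sum>j\<in>{0..<n}. (M ^\<^sub>m k) $$ (i,j) * u $ j)"
      using M u i by (simp add: scalar_prod_def)
    also have "\<dots> \<le> (\<Sum>j\<in>{0..<n}. c * u $ j)"
      using c[OF i] u by (intro sum_mono mult_right_mono) (auto simp: less_eq_vec_def abs_le_iff)
    finally show ?thesis by (simp add: S_def sum_distrib_left)
  qed
  moreover obtain k where "c * S / u $ i < q ^ k" using real_arch_pow[OF q] by blast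
  ultimately show False using ui by (smt (verit) pos_divide_less_eq)
qed

lemma collatz_wielandt_le_rho:
  fixes T :: "real mat"
  assumes T: "T \<in> carrier_mat n n" "T \<ge>\<^sub>m 0\<^sub>m n n"
    and u: "u \<in> carrier_vec n" "0\<^sub>v n \<le> u" "u \<noteq> 0\<^sub>v n" and Tu: "r \<cdot>\<^sub>v u \<le> T *\<^sub>v u"
  shows "r \<le> rho T"
proof (rule ccontr)
  assume "\<not> r \<le> rho T"
  have n: "n > 0" using u by (auto intro!: eq_vecI)
  define s where "s = (rho T + r) / 2"
  have s: "0 < s" "rho T < s" "s < r"
    using rho_nonneg[OF T(1) n] \<open>\<not> r \<le> rho T\<close> by (auto simp: s_def)
  define M where "M = (1 / s) \<cdot>\<^sub>m T"
  have M: "M \<in> carrier_mat n n" "M \<ge>\<^sub>m 0\<^sub>m n n" using T s by (auto simp: M_def mat_ge_def)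
  have "rho M \<le> (1 / s) * rho T" using rho_smult_le[OF T(1) n, of "1 / s"] s by (simp add: M_def)
  moreover have "(1 / s) * rho T < 1" using s by (simp add: divide_less_eq)
  ultimately have "rho M < 1" by linarith
  moreover have "(r / s) \<cdot>\<^sub>v u \<le> M *\<^sub>v u"
    using smult_vec_mono[OF _ Tu, of "1 / s"] s smult_mat_mult_vec[OF T(1) u(1)]
    by (simp add: M_def smult_smult_assoc)
  moreover have "1 < r / s" using s by simp
  ultimately show False using nonneg_expanding_imp_rho_ge_1[OF M u] by fastforce
qed

section \<open>Splittings of an orthogonal projector\<close>

lemma map_vec_cmod_smult: "map_vec cmod (a \<cdot>\<^sub>v v) = cmod a \<cdot>\<^sub>v map_vec cmod v"
  by (intro eq_vecI) (auto simp: norm_mult)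

lemma map_vec_cmod_eq_zero_iff:
  assumes v: "v \<in> carrier_vec n"
  shows "map_vec cmod v = 0\<^sub>v n \<longleftrightarrow> v = 0\<^sub>v n"
proof
  assume u0: "map_vec cmod v = 0\<^sub>v n"
  have "v $ i = 0" if "i < n" for i
  proof -
    have "cmod (v $ i) = map_vec cmod v $ i" using that v by simp
    thus ?thesis using u0 that by simp
  qed
  thus "v = 0\<^sub>v n" using v by (intro eq_vecI) auto
qed (use v in auto)

lemma cmod_mult_mat_vec_le:
  fixes M :: "real mat" and v :: "complex vec"
  assumes M: "M \<in> carrier_mat nr nc" "M \<ge>\<^sub>m 0\<^sub>m nr nc" and v: "v \<in> carrier_vec nc"
  shows "map_vec cmod (map_mat complex_of_real M *\<^sub>v v) \<le> M *\<^sub>v map_vec cmod v"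
  unfolding less_eq_vec_def
proof (intro conjI allI impI)
  fix i assume "i < dim_vec (M *\<^sub>v map_vec cmod v)"
  hence i: "i < nr" using M by simp
  have "cmod ((map_mat complex_of_real M *\<^sub>v v) $ i)
      = cmod (\<Sum>j\<in>{0..<nc}. complex_of_real (M $$ (i,j)) * v $ j)"
    using M v i by (simp add: scalar_prod_def)
  also have "\<dots> \<le> (\<Sum>j\<in>{0..<nc}. cmod (complex_of_real (M $$ (i,j)) * v $ j))" by (rule norm_sum)
  also have "\<dots> = (M *\<^sub>v map_vec cmod v) $ i"
    using M v i by (auto simp: scalar_prod_def norm_mult mat_ge_def intro!: sum.cong)
  finally show "map_vec cmod (map_mat complex_of_real M *\<^sub>v v) $ i \<le> (M *\<^sub>v map_vec cmod v) $ i"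
    using M i by simp
qed (use M in simp)

lemma eigenvector_fixed_of_left_unit:
  fixes F T :: "'a :: field mat"
  assumes F: "F \<in> carrier_mat n n" and T: "T \<in> carrier_mat n n" and FT: "F * T = T"
    and ev: "eigenvector T v l" and l: "l \<noteq> 0"
  shows "F *\<^sub>v v = v"
proof -
  have v: "v \<in> carrier_vec n" and Tv: "T *\<^sub>v v = l \<cdot>\<^sub>v v"
    using ev T by (auto simp: eigenvector_def)
  have "l \<cdot>\<^sub>v (F *\<^sub>v v) = F *\<^sub>v (T *\<^sub>v v)" using mult_mat_vec[OF F v] Tv by simp
  also have "\<dots> = l \<cdot>\<^sub>v v" using assoc_mult_mat_vec[OF F T v] FT Tv by simp
  finally have "(1 / l) \<cdot>\<^sub>v (l \<cdot>\<^sub>v (F *\<^sub>v v)) = (1 / l) \<cdot>\<^sub>v (l \<cdot>\<^sub>v v)" by simp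
  thus ?thesis using l by (simp add: smult_smult_assoc)
qed

lemma mult_vec_complement_eigenvector:
  fixes G T :: "'a :: comm_ring_1 mat"
  assumes G: "G \<in> carrier_mat n n" and T: "T \<in> carrier_mat n n" and v: "v \<in> carrier_vec n"
    and GTv: "(G + T) *\<^sub>v v = v" and Tv: "T *\<^sub>v v = l \<cdot>\<^sub>v v"
  shows "G *\<^sub>v v = (1 - l) \<cdot>\<^sub>v v"
proof (rule eq_vecI)
  fix i assume "i < dim_vec ((1 - l) \<cdot>\<^sub>v v)"
  hence i: "i < n" using v by simp
  have "v $ i = (G *\<^sub>v v) $ i + l * v $ i"
    using arg_cong[OF GTv, of "\<lambda>w. w $ i"] Tv G T v i by (simp add: add_mult_distrib_mat_vec)
  thus "(G *\<^sub>v v) $ i = ((1 - l) \<cdot>\<^sub>v v) $ i" using i v by (simp add: algebra_simps)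
qed (use G v in simp)

lemma le_mult_vec_of_cmod_bounds:
  fixes G T :: "real mat" and l :: complex
  assumes G: "G \<in> carrier_mat n n" and T: "T \<in> carrier_mat n n"
    and u: "u \<in> carrier_vec n" "0\<^sub>v n \<le> u"
    and Tu: "cmod l \<cdot>\<^sub>v u \<le> T *\<^sub>v u" and Gu: "cmod (1 - l) \<cdot>\<^sub>v u \<le> G *\<^sub>v u"
  shows "u \<le> (G + T) *\<^sub>v u"
proof -
  have "1 \<le> cmod l + cmod (1 - l)" using norm_triangle_ineq[of l "1 - l"] by simp
  hence "1 * u $ i \<le> (cmod l + cmod (1 - l)) * u $ i" if "i < n" for i
    using u that by (intro mult_right_mono) (auto simp: less_eq_vec_def)
  hence "u $ i \<le> cmod l * u $ i + cmod (1 - l) * u $ i" if "i < n" for i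
    using that by (simp add: distrib_right)
  thus ?thesis using Tu Gu u G T
    by (fastforce simp: less_eq_vec_def add_mult_distrib_mat_vec intro: add_mono order.trans)
qed

lemma projector_splitting_nonneg_eigenvector:
  fixes F G T :: "real mat"
  assumes F: "orth_projector n F" and G: "G \<in> carrier_mat n n" "G \<ge>\<^sub>m 0\<^sub>m n n"
    and T: "T \<in> carrier_mat n n" "T \<ge>\<^sub>m 0\<^sub>m n n" and FGT: "F = G + T" and FT: "F * T = T"
    and ev: "eigenvector (map_mat complex_of_real T) v l" and l: "l \<noteq> 0"
  shows "\<exists>u \<in> carrier_vec n. 0\<^sub>v n \<le> u \<and> u \<noteq> 0\<^sub>v n \<and> F *\<^sub>v u = u \<and>
    cmod l \<cdot>\<^sub>v u \<le> T *\<^sub>v u \<and> cmod (1 - l) \<cdot>\<^sub>v u \<le> G *\<^sub>v u"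
proof -
  let ?c = "map_mat complex_of_real"
  have F_carr: "F \<in> carrier_mat n n" using F by (simp add: orth_projector_def)
  have v: "v \<in> carrier_vec n" "v \<noteq> 0\<^sub>v n" and Tv: "?c T *\<^sub>v v = l \<cdot>\<^sub>v v"
    using ev T by (auto simp: eigenvector_def)
  have "?c F * ?c T = ?c T" using of_real_hom.mat_hom_mult[OF F_carr T(1)] FT by metis
  hence "?c F *\<^sub>v v = v" using eigenvector_fixed_of_left_unit[OF _ _ _ ev l] F_carr T by simp
  moreover have "?c F = ?c G + ?c T" using FGT G T by (intro eq_matI) auto
  ultimately have Gv: "?c G *\<^sub>v v = (1 - l) \<cdot>\<^sub>v v"
    using mult_vec_complement_eigenvector[of "?c G" n "?c T"] G T v Tv by simp
  define u where "u = map_vec cmod v"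
  have u: "u \<in> carrier_vec n" "0\<^sub>v n \<le> u" "u \<noteq> 0\<^sub>v n"
    using v map_vec_cmod_eq_zero_iff[OF v(1)] by (auto simp: u_def less_eq_vec_def)
  have Tu: "cmod l \<cdot>\<^sub>v u \<le> T *\<^sub>v u"
    using cmod_mult_mat_vec_le[OF T v(1)] Tv by (simp add: u_def map_vec_cmod_smult)
  have Gu: "cmod (1 - l) \<cdot>\<^sub>v u \<le> G *\<^sub>v u"
    using cmod_mult_mat_vec_le[OF G v(1)] Gv by (simp add: u_def map_vec_cmod_smult)
  have "F *\<^sub>v u = u"
    using orth_projector_fixes_of_le[OF F u(1,2)] le_mult_vec_of_cmod_bounds[OF G(1) T(1) u(1,2) Tu Gu]
    by (simp add: FGT)
  thus ?thesis using u Tu Gu by blast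
qed

lemma rho_lt_1_of_projector_splitting:
  fixes F G T :: "real mat"
  assumes F: "orth_projector n F" and G: "G \<in> carrier_mat n n" "G \<ge>\<^sub>m 0\<^sub>m n n"
    and T: "T \<in> carrier_mat n n" "T \<ge>\<^sub>m 0\<^sub>m n n" and FGT: "F = G + T" and FT: "F * T = T"
    and null: "null_mat G \<subseteq> null_mat F" and n: "n > 0"
  shows "rho T < 1"
proof -
  obtain v l where ev: "eigenvector (map_mat complex_of_real T) v l" and rho: "rho T = cmod l"
    using rho_attained[OF T(1) n] .
  show ?thesis
  proof (rule ccontr)
    assume "\<not> rho T < 1"
    hence l: "1 \<le> cmod l" "l \<noteq> 0" using rho by auto
    then obtain u where u: "u \<in> carrier_vec n" "0\<^sub>v n \<le> u" "u \<noteq> 0\<^sub>v n" "F *\<^sub>v u = u"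
      and Tu: "cmod l \<cdot>\<^sub>v u \<le> T *\<^sub>v u" and Gu: "cmod (1 - l) \<cdot>\<^sub>v u \<le> G *\<^sub>v u"
      using projector_splitting_nonneg_eigenvector[OF F G T FGT FT ev] by blast
    have split: "u = G *\<^sub>v u + T *\<^sub>v u" using u FGT G T by (simp add: add_mult_distrib_mat_vec)
    have "G *\<^sub>v u = 0\<^sub>v n"
    proof (rule eq_vecI)
      fix i assume "i < dim_vec (0\<^sub>v n :: real vec)"
      hence i: "i < n" by simp
      have "u $ i = (G *\<^sub>v u) $ i + (T *\<^sub>v u) $ i" using arg_cong[OF split, of "\<lambda>w. w $ i"] G T u i by simp
      moreover have "cmod l * u $ i \<le> (T *\<^sub>v u) $ i" "cmod (1 - l) * u $ i \<le> (G *\<^sub>v u) $ i" "0 \<le> u $ i"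
        using Tu Gu u(2) i G T by (auto simp: less_eq_vec_def)
      moreover have "u $ i \<le> cmod l * u $ i" using mult_right_mono[OF l(1) \<open>0 \<le> u $ i\<close>] by simp
      ultimately show "(G *\<^sub>v u) $ i = 0\<^sub>v n $ i" using i
        by (smt (verit) mult_nonneg_nonneg norm_ge_zero index_zero_vec(1))
    qed (use G in simp)
    hence "F *\<^sub>v u = 0\<^sub>v n" using null u G F by (auto simp: null_mat_def orth_projector_def)
    thus False using u by simp
  qed
qed

lemma rho_le_of_projector_splittings:
  fixes F G1 T1 G2 T2 :: "real mat"
  assumes F: "orth_projector n F" and n: "n > 0"
    and G1: "G1 \<in> carrier_mat n n" "G1 \<ge>\<^sub>m 0\<^sub>m n n" and T1: "T1 \<in> carrier_mat n n" "T1 \<ge>\<^sub>m 0\<^sub>m n n"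
    and G2: "G2 \<in> carrier_mat n n" "G2 \<ge>\<^sub>m G1" and T2: "T2 \<in> carrier_mat n n" "T2 \<ge>\<^sub>m 0\<^sub>m n n"
    and split1: "F = G1 + T1" and split2: "F = G2 + T2" and FT2: "F * T2 = T2"
  shows "rho T2 \<le> rho T1"
proof -
  obtain v l where ev: "eigenvector (map_mat complex_of_real T2) v l" and rho: "rho T2 = cmod l"
    using rho_attained[OF T2(1) n] .
  show ?thesis
  proof (cases "l = 0")
    case True
    thus ?thesis using rho rho_nonneg[OF T1(1) n] by simp
  next
    case False
    have G2_nonneg: "G2 \<ge>\<^sub>m 0\<^sub>m n n"
      using G1 G2 by (auto simp: mat_ge_def) (meson order.trans)
    obtain u where u: "u \<in> carrier_vec n" "0\<^sub>v n \<le> u" "u \<noteq> 0\<^sub>v n" "F *\<^sub>v u = u"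
      and T2u: "cmod l \<cdot>\<^sub>v u \<le> T2 *\<^sub>v u"
      using projector_splitting_nonneg_eigenvector[OF F G2(1) G2_nonneg T2 split2 FT2 ev False] by blast
    have "T2 *\<^sub>v u \<le> T1 *\<^sub>v u"
    proof -
      have sums: "G1 *\<^sub>v u + T1 *\<^sub>v u = G2 *\<^sub>v u + T2 *\<^sub>v u"
        using split1 split2 G1 T1 G2 T2 u by (simp add: add_mult_distrib_mat_vec[symmetric])
      have G_le: "G1 *\<^sub>v u \<le> G2 *\<^sub>v u" by (rule mult_mat_vec_mono_mat[OF G2(1) G1(1) G2(2) u(2)])
      show ?thesis unfolding less_eq_vec_def
      proof (intro conjI allI impI)
        fix i assume "i < dim_vec (T1 *\<^sub>v u)"
        hence i: "i < n" using T1 by simp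
        have "(G1 *\<^sub>v u) $ i + (T1 *\<^sub>v u) $ i = (G2 *\<^sub>v u) $ i + (T2 *\<^sub>v u) $ i"
          using arg_cong[OF sums, of "\<lambda>w. w $ i"] G1 T1 G2 T2 i by simp
        moreover have "(G1 *\<^sub>v u) $ i \<le> (G2 *\<^sub>v u) $ i" using G_le i G1 G2 by (simp add: less_eq_vec_def)
        ultimately show "(T2 *\<^sub>v u) $ i \<le> (T1 *\<^sub>v u) $ i" by linarith
      qed (use T1 T2 in simp)
    qed
    hence "cmod l \<le> rho T1"
      using collatz_wielandt_le_rho[OF T1 u(1-3)] T2u order.trans by blast
    thus ?thesis using rho by simp
  qed
qed

section \<open>Comparison of proper splittings\<close>

lemma rho_lt_1_of_proper_splitting:
  fixes A U V :: "real mat"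
  assumes A: "A \<in> carrier_mat m n" "A \<ge>\<^sub>m 0\<^sub>m m n" and n: "n > 0"
    and split: "proper_splitting A U V"
    and Q: "mp_inverse U \<ge>\<^sub>m 0\<^sub>m n m" and V: "V \<ge>\<^sub>m 0\<^sub>m m n"
  shows "rho (mp_inverse U * V) < 1"
proof -
  note proj = proper_splitting_projector[OF A(1) split]
  have carr: "U \<in> carrier_mat m n" "V \<in> carrier_mat m n" "mp_inverse U \<in> carrier_mat n m"
    using proper_splitting_carrier[OF split A(1)] mp_inverse_carrier by auto
  have "mp_inverse U * A \<ge>\<^sub>m 0\<^sub>m n n" "mp_inverse U * V \<ge>\<^sub>m 0\<^sub>m n n"
    using mult_mat_ge_zero carr A Q V by auto
  thus ?thesis
    using rho_lt_1_of_projector_splitting[OF proj(1) _ _ _ _ proj(2,3)] proj(4,5) carr A n by auto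
qed

lemma rho_le_of_proper_splittings:
  fixes A B C U V :: "real mat"
  assumes A: "A \<in> carrier_mat m n" "A \<ge>\<^sub>m 0\<^sub>m m n" and n: "n > 0"
    and splitB: "proper_splitting A B C" and splitU: "proper_splitting A U V"
    and Q: "mp_inverse U \<ge>\<^sub>m 0\<^sub>m n m" and V: "V \<ge>\<^sub>m 0\<^sub>m m n"
    and PC: "mp_inverse B * C \<ge>\<^sub>m 0\<^sub>m n n" and PQ: "mp_inverse B \<ge>\<^sub>m mp_inverse U"
  shows "rho (mp_inverse B * C) \<le> rho (mp_inverse U * V)"
proof -
  note projB = proper_splitting_projector[OF A(1) splitB]
  note projU = proper_splitting_projector[OF A(1) splitU]
  have carr: "B \<in> carrier_mat m n" "C \<in> carrier_mat m n" "U \<in> carrier_mat m n" "V \<in> carrier_mat m n"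
    using proper_splitting_carrier[OF splitB A(1)] proper_splitting_carrier[OF splitU A(1)] by auto
  have P_carr: "mp_inverse B \<in> carrier_mat n m" and Q_carr: "mp_inverse U \<in> carrier_mat n m"
    using mp_inverse_carrier carr by auto
  have F_eq: "mp_inverse B * B = mp_inverse U * U"
    using orth_projector_eq_of_null_eq projB projU by simp
  have QA: "mp_inverse U * A \<ge>\<^sub>m 0\<^sub>m n n" and QV: "mp_inverse U * V \<ge>\<^sub>m 0\<^sub>m n n"
    using mult_mat_ge_zero carr Q_carr A Q V by auto
  have PA: "mp_inverse B * A \<ge>\<^sub>m mp_inverse U * A"
    by (rule mult_mat_mono_left[OF P_carr Q_carr A(1) PQ A(2)])
  have "mp_inverse U * U = mp_inverse B * A + mp_inverse B * C"
    and "mp_inverse U * U * (mp_inverse B * C) = mp_inverse B * C"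
    using projB(2,3) F_eq by simp_all
  from rho_le_of_projector_splittings[OF projU(1) n _ QA _ QV _ PA _ PC projU(2) this]
  show ?thesis using P_carr Q_carr carr A(1) by simp
qed

theorem theorem3p9:
  fixes A B C U V :: "real mat" and m n :: nat
  assumes "A \<in> carrier_mat m n"
    and "mat_nonneg (mp_inverse A)"
    and "proper_weak_regular_splitting A B C"
    and "proper_regular_splitting A U V"
    and "mat_nonneg A"
    and "mat_geq (mp_inverse B) (mp_inverse U)"
  shows "rho (mp_inverse B * C) \<le> rho (mp_inverse U * V) \<and> rho (mp_inverse U * V) < 1"
proof -
  note A = assms(1)
  have n: "n > 0" using assms(5) A by (auto simp: mat_nonneg_def)
  have splitB: "proper_splitting A B C" and PC: "mat_nonneg (mp_inverse B * C)"
    using assms(3) by (auto simp: proper_weak_regular_splitting_def)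
  have splitU: "proper_splitting A U V" and Q: "mat_nonneg (mp_inverse U)" and V: "mat_nonneg V"
    using assms(4) by (auto simp: proper_regular_splitting_def)
  have carr: "B \<in> carrier_mat m n" "C \<in> carrier_mat m n" "U \<in> carrier_mat m n" "V \<in> carrier_mat m n"
    using proper_splitting_carrier[OF splitB A] proper_splitting_carrier[OF splitU A] by auto
  have mp_carr: "mp_inverse B \<in> carrier_mat n m" "mp_inverse U \<in> carrier_mat n m"
    using mp_inverse_carrier carr by auto
  have nonneg: "A \<ge>\<^sub>m 0\<^sub>m m n" "mp_inverse U \<ge>\<^sub>m 0\<^sub>m n m" "V \<ge>\<^sub>m 0\<^sub>m m n"
    "mp_inverse B * C \<ge>\<^sub>m 0\<^sub>m n n" "mp_inverse B \<ge>\<^sub>m mp_inverse U"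
    using mat_nonneg_imp_ge_0[OF assms(5)] mat_nonneg_imp_ge_0[OF Q] mat_nonneg_imp_ge_0[OF V]
      mat_nonneg_imp_ge_0[OF PC] mat_geq_imp_mat_ge[OF _ _ assms(6)] mp_carr carr A
    by auto
  show ?thesis
    using rho_le_of_proper_splittings[OF A nonneg(1) n splitB splitU nonneg(2-5)]
      rho_lt_1_of_proper_splitting[OF A nonneg(1) n splitU nonneg(2,3)] by simp
qed

end
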